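(* Fix an instance of the data in the context and a cycle basis of the network graph $(\mathcal B,\mathcal L)$. For each cycle $C$ of the basis, with buses labeled $1,\dots,n$ in cyclic order ($n=|C|$) and oriented edges $(1,2),\dots,(n-1,n),(n,1)$, impose: (i) if $n=3$: $s_{12}c_{33}+c_{23}s_{31}+s_{23}c_{31}=0$ and $c_{12}c_{33}-c_{23}c_{31}+s_{23}s_{31}=0$; (ii) if $n\ge4$: introduce auxiliary real variables $\tilde c_{1,i},\tilde s_{1,i}$ for $i=3,\dots,n-1$, set $\tilde c_{12}=c_{12}$, $\tilde s_{12}=s_{12}$, $\tilde c_{1n}=c_{1n}$, $\tilde s_{1n}=s_{1n}$, and impose for $i=2,\dots,n-1$: $\tilde s_{1,i}c_{i+1,i+1}+s_{i,i+1}\tilde c_{1,i+1}-\tilde s_{1,i+1}c_{i,i+1}=0$ and $\tilde c_{1,i}c_{i+1,i+1}-c_{i,i+1}\tilde c_{1,i+1}-\tilde s_{1,i+1}s_{i,i+1}=0$; for $i=2,\dots,n-1$: $\tilde c_{1,i}^2+\tilde s_{1,i}^2=c_{11}c_{ii}$; and $c_{ij}^2+s_{ij}^2=c_{ii}c_{jj}$ for every edge $(i,j)$ of $C$. Then: (a) (validity) for every feasible point $(p^g,q^g,c,s,\theta)$ of the OPF formulation in the context, there exist values of the auxiliary variables such that all the constraints (i)–(ii) hold for every cycle of the basis; and (b) every $(p^g,q^g,c,s)$ satisfying (ALT), the coupling equalities $c_{ij}^2+s_{ij}^2=c_{ii}c_{jj}$ for all lines, and constraints (i)–(ii) (for some values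 of the auxiliary variables) satisfies, for each cycle $C$ in the basis, $\sum_{(i,j)\in C}\operatorname{atan2}(s_{ij},c_{ij})=2\pi k$ for some integer $k$ (sum over the oriented edges of $C$).
   Context: Data: finite bus set $\mathcal B$, line set $\mathcal L$ (unordered pairs of distinct buses; variables $c_{ij},s_{ij}$ for both orientations of each line), $\delta(i)$ the neighbors of $i$, generator set $\mathcal G\subseteq\mathcal B$, reals $G_{ij},B_{ij}$ (lines), $G_{ii},B_{ii}$ (buses), demands $p_i^d,q_i^d$, voltage bounds $0<\underline V_i\le\overline V_i$, generator bounds $p_i^{\min}\le p_i^{\max}$, $q_i^{\min}\le q_i^{\max}$ ($i\in\mathcal G$). Variables $p_i^g,q_i^g$ for $i\in\mathcal G$, with $p_i^g=q_i^g=0$ for $i\notin\mathcal G$. (ALT): $p_i^g-p_i^d=G_{ii}c_{ii}+\sum_{j\in\delta(i)}(G_{ij}c_{ij}-B_{ij}s_{ij})$, $q_i^g-q_i^d=-B_{ii}c_{ii}+\sum_{j\in\delta(i)}(-B_{ij}c_{ij}-G_{ij}s_{ij})$, $\underline V_i^2\le c_{ii}\le\overline V_i^2$ ($i\in\mathcal B$); $c_{ij}=c_{ji}$, $s_{ij}=-s_{ji}$ (lines); $p_i^{\min}\le p_i^g\le p_i^{\max}$, $q_i^{\min}\le q_i^g\le q_i^{\max}$ ($i\in\mathcal G$). OPF formulation: variables $(p^g,q^g,c,s,\theta)$ with $\theta\in\mathbb R^{\mathcal B}$ satisfying (ALT), $c_{ij}^2+s_{ij}^2=c_{ii}c_{jj}$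 and $\theta_j-\theta_i=\operatorname{atan2}(s_{ij},c_{ij})$ for every line $(i,j)$ (one fixed orientation per line suffices by symmetry). Here $\operatorname{atan2}(y,x)\in(-\pi,\pi]$ is the angle of the point $(x,y)\neq(0,0)$. A cycle basis is a basis of the cycle space of the graph consisting of cycles. *)

theory Defs
  imports "HOL-Analysis.Analysis"
begin

text \<open>atan2(y,x): the angle in (-pi,pi] of the point (x,y); Arg is the principal argument.\<close>
definition atan2 :: "real \<Rightarrow> real \<Rightarrow> real" where
  "atan2 y x = Arg (Complex x y)"

record 'b network =
  buses :: "'b set"
  lines :: "'b set set"
  gens  :: "'b set"
  Gc    :: "'b \<Rightarrow> 'b \<Rightarrow> real"
  Bc    :: "'b \<Rightarrow> 'b \<Rightarrow> real"
  pd    :: "'b \<Rightarrow> real"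
  qd    :: "'b \<Rightarrow> real"
  Vmin  :: "'b \<Rightarrow> real"
  Vmax  :: "'b \<Rightarrow> real"
  pmin  :: "'b \<Rightarrow> real"
  pmax  :: "'b \<Rightarrow> real"
  qmin  :: "'b \<Rightarrow> real"
  qmax  :: "'b \<Rightarrow> real"

definition wf_network :: "'b network \<Rightarrow> bool" where
  "wf_network N \<longleftrightarrow>
     finite (buses N) \<and>
     (\<forall>e\<in>lines N. \<exists>i j. e = {i, j} \<and> i \<in> buses N \<and> j \<in> buses N \<and> i \<noteq> j) \<and>
     gens N \<subseteq> buses N \<and>
     (\<forall>i\<in>buses N. 0 < Vmin N i \<and> Vmin N i \<le> Vmax N i) \<and>
     (\<forall>i\<in>gens N. pmin N i \<le> pmax N i \<and> qmin N i \<le> qmax N i)"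

definition nbrs :: "'b network \<Rightarrow> 'b \<Rightarrow> 'b set" where
  "nbrs N i = {j. {i, j} \<in> lines N}"

definition ALT :: "'b network \<Rightarrow> ('b \<Rightarrow> real) \<Rightarrow> ('b \<Rightarrow> real)
     \<Rightarrow> ('b \<Rightarrow> 'b \<Rightarrow> real) \<Rightarrow> ('b \<Rightarrow> 'b \<Rightarrow> real) \<Rightarrow> bool" where
  "ALT N pg qg c s \<longleftrightarrow>
     (\<forall>i\<in>buses N.
        pg i - pd N i = Gc N i i * c i i
                        + (\<Sum>j\<in>nbrs N i. Gc N i j * c i j - Bc N i j * s i j) \<and>
        qg i - qd N i = - Bc N i i * c i i
                        + (\<Sum>j\<in>nbrs N i. - Bc N i j * c i j - Gc N i j * s i j) \<and>
        (Vmin N i)\<^sup>2 \<le> c i i \<and> c i i \<le> (Vmax N i)\<^sup>2) \<and>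
     (\<forall>i j. {i, j} \<in> lines N \<longrightarrow> c i j = c j i \<and> s i j = - s j i) \<and>
     (\<forall>i\<in>gens N. pmin N i \<le> pg i \<and> pg i \<le> pmax N i \<and> qmin N i \<le> qg i \<and> qg i \<le> qmax N i) \<and>
     (\<forall>i\<in>buses N - gens N. pg i = 0 \<and> qg i = 0)"

definition coupling :: "'b network \<Rightarrow> ('b \<Rightarrow> 'b \<Rightarrow> real) \<Rightarrow> ('b \<Rightarrow> 'b \<Rightarrow> real) \<Rightarrow> bool" where
  "coupling N c s \<longleftrightarrow>
     (\<forall>i j. {i, j} \<in> lines N \<longrightarrow> (c i j)\<^sup>2 + (s i j)\<^sup>2 = c i i * c j j)"

definition orientation :: "'b network \<Rightarrow> ('b \<times> 'b) set \<Rightarrow> bool" where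
  "orientation N Or \<longleftrightarrow>
     (\<forall>(i, j)\<in>Or. {i, j} \<in> lines N) \<and>
     (\<forall>i j. {i, j} \<in> lines N \<longrightarrow> ((i, j) \<in> Or \<longleftrightarrow> (j, i) \<notin> Or))"

definition OPF_feasible :: "'b network \<Rightarrow> ('b \<times> 'b) set \<Rightarrow> ('b \<Rightarrow> real) \<Rightarrow> ('b \<Rightarrow> real)
     \<Rightarrow> ('b \<Rightarrow> 'b \<Rightarrow> real) \<Rightarrow> ('b \<Rightarrow> 'b \<Rightarrow> real) \<Rightarrow> ('b \<Rightarrow> real) \<Rightarrow> bool" where
  "OPF_feasible N Or pg qg c s \<theta> \<longleftrightarrow>
     ALT N pg qg c s \<and> coupling N c s \<and>
     (\<forall>(i, j)\<in>Or. \<theta> j - \<theta> i = atan2 (s i j) (c i j))"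

text \<open>Cycles, given as vertex lists in cyclic order (the list fixes the labeling 1..n
  and the orientation (1,2),...,(n-1,n),(n,1)).\<close>
definition succ_idx :: "nat \<Rightarrow> nat \<Rightarrow> nat" where
  "succ_idx n k = (Suc k) mod n"

definition is_cycle :: "'b network \<Rightarrow> 'b list \<Rightarrow> bool" where
  "is_cycle N C \<longleftrightarrow> distinct C \<and> 3 \<le> length C \<and> set C \<subseteq> buses N \<and>
     (\<forall>k<length C. {C ! k, C ! succ_idx (length C) k} \<in> lines N)"

definition cyc_edges :: "'b list \<Rightarrow> 'b set set" where
  "cyc_edges C = {{C ! k, C ! succ_idx (length C) k} | k. k < length C}"

text \<open>Cycle space over GF(2): edge sets in which every bus has even degree.\<close>
definition cycle_space :: "'b network \<Rightarrow> 'b set set set" where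
  "cycle_space N = {F. F \<subseteq> lines N \<and> (\<forall>v\<in>buses N. even (card {e\<in>F. v \<in> e}))}"

text \<open>GF(2)-sum (iterated symmetric difference) of the edge sets of a family of cycles.\<close>
definition xor_sum :: "'b list set \<Rightarrow> 'b set set" where
  "xor_sum S = {e. odd (card {C\<in>S. e \<in> cyc_edges C})}"

definition cycle_basis :: "'b network \<Rightarrow> 'b list set \<Rightarrow> bool" where
  "cycle_basis N \<C> \<longleftrightarrow> finite \<C> \<and> (\<forall>C\<in>\<C>. is_cycle N C) \<and>
     inj_on xor_sum (Pow \<C>) \<and> xor_sum ` Pow \<C> = cycle_space N"

text \<open>Constraints (i)/(ii) for a cycle C with auxiliary variables ct, st (indices 1-based:
  bus i of the cycle is C ! (i-1)).\<close>
definition cycle_constr :: "('b \<Rightarrow> 'b \<Rightarrow> real) \<Rightarrow> ('b \<Rightarrow> 'b \<Rightarrow> real) \<Rightarrow> 'b list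
     \<Rightarrow> (nat \<Rightarrow> real) \<Rightarrow> (nat \<Rightarrow> real) \<Rightarrow> bool" where
  "cycle_constr c s C ct st \<longleftrightarrow>
    (let n = length C; v = (\<lambda>i. C ! (i - 1)) in
     (n = 3 \<longrightarrow>
        s (v 1) (v 2) * c (v 3) (v 3) + c (v 2) (v 3) * s (v 3) (v 1)
          + s (v 2) (v 3) * c (v 3) (v 1) = 0 \<and>
        c (v 1) (v 2) * c (v 3) (v 3) - c (v 2) (v 3) * c (v 3) (v 1)
          + s (v 2) (v 3) * s (v 3) (v 1) = 0) \<and>
     (4 \<le> n \<longrightarrow>
        ct 2 = c (v 1) (v 2) \<and> st 2 = s (v 1) (v 2) \<and>
        ct n = c (v 1) (v n) \<and> st n = s (v 1) (v n) \<and>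
        (\<forall>i\<in>{2..n-1}.
           st i * c (v (i+1)) (v (i+1)) + s (v i) (v (i+1)) * ct (i+1)
             - st (i+1) * c (v i) (v (i+1)) = 0 \<and>
           ct i * c (v (i+1)) (v (i+1)) - c (v i) (v (i+1)) * ct (i+1)
             - st (i+1) * s (v i) (v (i+1)) = 0) \<and>
        (\<forall>i\<in>{2..n-1}. (ct i)\<^sup>2 + (st i)\<^sup>2 = c (v 1) (v 1) * c (v i) (v i)) \<and>
        (\<forall>k<n. (c (C ! k) (C ! succ_idx n k))\<^sup>2 + (s (C ! k) (C ! succ_idx n k))\<^sup>2
                 = c (C ! k) (C ! k) * c (C ! succ_idx n k) (C ! succ_idx n k))))"

definition cycle_angle_sum :: "('b \<Rightarrow> 'b \<Rightarrow> real) \<Rightarrow> ('b \<Rightarrow> 'b \<Rightarrow> real) \<Rightarrow> 'b list \<Rightarrow> real" where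
  "cycle_angle_sum c s C =
     (\<Sum>k<length C. atan2 (s (C ! k) (C ! succ_idx (length C) k)) (c (C ! k) (C ! succ_idx (length C) k)))"

end

theory Submission
  imports Defs
begin

text \<open>Put \<open>W(i,j) = c(i,j) + \<i> s(i,j)\<close>. At a feasible OPF point \<open>W(i,j) = cnj V(i) * V(j)\<close> for the
  bus voltages \<open>V(i) = sqrt c(i,i) * cis \<theta>(i)\<close>. The cycle constraints are the real and imaginary
  parts of \<open>c(i+1,i+1) * U(i) = cnj W(i,i+1) * U(i+1)\<close> for the auxiliary values
  \<open>U(i) = c~(1,i) + \<i> s~(1,i)\<close> (for a triangle, with \<open>U(3) = cnj W(3,1)\<close> eliminated), and
  \<open>U(i) = cnj V(1) * V(i)\<close> satisfies them. Conversely, multiplying each relation by \<open>W(i,i+1)\<close>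
  and using \<open>|W(i,i+1)|\<^sup>2 = c(i,i) c(i+1,i+1)\<close> telescopes the product of the \<open>W\<close> around the
  cycle to the positive real \<open>\<Prod>\<^sub>i c(i,i)\<close>, so the arguments of the edge values sum to a multiple
  of \<open>2\<pi>\<close>.\<close>

definition cs_complex :: "('b \<Rightarrow> 'b \<Rightarrow> real) \<Rightarrow> ('b \<Rightarrow> 'b \<Rightarrow> real) \<Rightarrow> 'b \<Rightarrow> 'b \<Rightarrow> complex" where
  "cs_complex c s i j = Complex (c i j) (s i j)"

lemma cis_sum: "cis (\<Sum>k\<in>A. f k) = (\<Prod>k\<in>A. cis (f k))"
  by (induction A rule: infinite_finite_induct) (simp_all add: cis_mult[symmetric])

lemma sgn_prod_complex: "sgn (\<Prod>k\<in>A. z k :: complex) = (\<Prod>k\<in>A. sgn (z k))"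
  by (induction A rule: infinite_finite_induct) (simp_all add: sgn_mult)

lemma cnj_rcis: "cnj (rcis r a) = rcis r (- a)"
  by (simp add: rcis_def cis_cnj)

lemma sum_Arg_eq_2pi_int:
  assumes "\<And>k. k \<in> A \<Longrightarrow> z k \<noteq> 0" and "(\<Prod>k\<in>A. z k) = complex_of_real r" and "0 < r"
  shows "\<exists>m::int. (\<Sum>k\<in>A. Arg (z k)) = 2 * pi * of_int m"
proof -
  have "cis (\<Sum>k\<in>A. Arg (z k)) = sgn (\<Prod>k\<in>A. z k)"
    using assms(1) by (simp add: cis_sum sgn_prod_complex cis_Arg)
  also have "\<dots> = 1"
    using assms(2,3) by (simp add: sgn_of_real)
  finally have "cos (\<Sum>k\<in>A. Arg (z k)) = 1"
    by (metis cis.sel(1) one_complex.sel(1))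
  then obtain m :: int where "(\<Sum>k\<in>A. Arg (z k)) = m * 2 * pi"
    by (auto simp: cos_one_2pi_int)
  then show ?thesis by (intro exI[of _ m]) simp
qed

lemma succ_idx_less: "0 < n \<Longrightarrow> succ_idx n k < n"
  by (simp add: succ_idx_def)

lemma succ_idx_eq_Suc: "Suc k < n \<Longrightarrow> succ_idx n k = Suc k"
  by (simp add: succ_idx_def)

lemma succ_idx_last: "0 < n \<Longrightarrow> succ_idx n (n - 1) = 0"
  by (simp add: succ_idx_def)

lemma is_cycleD:
  assumes "is_cycle N C" and "k < length C"
  shows "C ! k \<in> buses N" and "{C ! k, C ! succ_idx (length C) k} \<in> lines N"
  using assms unfolding is_cycle_def by auto

lemma is_cycle_closing_line:
  assumes "is_cycle N C"
  shows "{C ! 0, C ! (length C - 1)} \<in> lines N"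
proof -
  have "3 \<le> length C" using assms by (simp add: is_cycle_def)
  then have "succ_idx (length C) (length C - 1) = 0"
    by (intro succ_idx_last) linarith
  then show ?thesis
    using is_cycleD(2)[OF assms, of "length C - 1"] \<open>3 \<le> length C\<close> by (simp add: insert_commute)
qed

lemma chain_step_iff:
  "complex_of_real d * Complex ct st = cnj (Complex cc ss) * Complex ct' st' \<longleftrightarrow>
     st * d + ss * ct' - st' * cc = 0 \<and> ct * d - cc * ct' - st' * ss = 0"
  by (auto simp: complex_eq_iff algebra_simps)

lemma cycle_constr_triangle_iff:
  fixes c s :: "'b \<Rightarrow> 'b \<Rightarrow> real" and W :: "nat \<Rightarrow> complex" and d :: "nat \<Rightarrow> real"
  assumes n_def: "n = length C"
    and W_def: "W = (\<lambda>k. cs_complex c s (C ! k) (C ! succ_idx n k))"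
    and d_def: "d = (\<lambda>k. c (C ! k) (C ! k))"
    and "n = 3"
  shows "cycle_constr c s C ct st \<longleftrightarrow> d 2 * W 0 = cnj (W 1) * cnj (W 2)"
proof -
  have "succ_idx n 0 = 1" "succ_idx n 1 = 2" "succ_idx n 2 = 0"
    using \<open>n = 3\<close> by (simp_all add: succ_idx_def)
  then show ?thesis
    using \<open>n = 3\<close> unfolding cycle_constr_def Let_def n_def[symmetric]
    by (simp add: W_def d_def cs_complex_def complex_eq_iff) (auto simp: algebra_simps)
qed

text \<open>Edges are indexed from 0 (\<open>W k\<close> lives on the edge from \<open>C ! k\<close> to its successor) but the
  auxiliary values from 1, as in \<open>cycle_constr\<close>: \<open>u i = U(i)\<close> belongs to bus \<open>C ! (i - 1)\<close>.\<close>

lemma cycle_constr_chain_iff: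
  fixes c s :: "'b \<Rightarrow> 'b \<Rightarrow> real" and ct st :: "nat \<Rightarrow> real"
    and W u :: "nat \<Rightarrow> complex" and d :: "nat \<Rightarrow> real"
  assumes n_def: "n = length C"
    and W_def: "W = (\<lambda>k. cs_complex c s (C ! k) (C ! succ_idx n k))"
    and d_def: "d = (\<lambda>k. c (C ! k) (C ! k))"
    and u_def: "u = (\<lambda>i. Complex (ct i) (st i))"
    and "4 \<le> n"
  shows "cycle_constr c s C ct st \<longleftrightarrow>
    u 2 = W 0 \<and> u n = cs_complex c s (C ! 0) (C ! (n - 1)) \<and>
    (\<forall>i\<in>{2..n-1}. d i * u i = cnj (W (i - 1)) * u (Suc i)) \<and>
    (\<forall>i\<in>{2..n-1}. (cmod (u i))\<^sup>2 = d 0 * d (i - 1)) \<and>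
    (\<forall>k<n. (cmod (W k))\<^sup>2 = d k * d (succ_idx n k))"
proof -
  have chain: "
      st i * c (C!i) (C!i) + s (C!(i-1)) (C!i) * ct (i+1) - st (i+1) * c (C!(i-1)) (C!i) = 0 \<and>
      ct i * c (C!i) (C!i) - c (C!(i-1)) (C!i) * ct (i+1) - st (i+1) * s (C!(i-1)) (C!i) = 0
      \<longleftrightarrow> d i * u i = cnj (W (i - 1)) * u (Suc i)" if "i \<in> {2..n-1}" for i
    using that chain_step_iff by (auto simp: W_def d_def u_def cs_complex_def succ_idx_def n_def)
  have "cycle_constr c s C ct st \<longleftrightarrow>
      (ct 2 = c (C!0) (C!1) \<and> st 2 = s (C!0) (C!1)) \<and>
      (ct n = c (C!0) (C!(n-1)) \<and> st n = s (C!0) (C!(n-1))) \<and>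
      (\<forall>i\<in>{2..n-1}.
        st i * c (C!i) (C!i) + s (C!(i-1)) (C!i) * ct (i+1) - st (i+1) * c (C!(i-1)) (C!i) = 0 \<and>
        ct i * c (C!i) (C!i) - c (C!(i-1)) (C!i) * ct (i+1) - st (i+1) * s (C!(i-1)) (C!i) = 0) \<and>
      (\<forall>i\<in>{2..n-1}. (ct i)\<^sup>2 + (st i)\<^sup>2 = c (C!0) (C!0) * c (C!(i-1)) (C!(i-1))) \<and>
      (\<forall>k<n. (c (C!k) (C!succ_idx n k))\<^sup>2 + (s (C!k) (C!succ_idx n k))\<^sup>2
               = c (C!k) (C!k) * c (C!succ_idx n k) (C!succ_idx n k))"
    unfolding cycle_constr_def Let_def n_def[symmetric] using \<open>4 \<le> n\<close> by simp
  also have "\<dots> \<longleftrightarrow> u 2 = W 0 \<and> u n = cs_complex c s (C ! 0) (C ! (n - 1)) \<and>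
      (\<forall>i\<in>{2..n-1}. d i * u i = cnj (W (i - 1)) * u (Suc i)) \<and>
      (\<forall>i\<in>{2..n-1}. (cmod (u i))\<^sup>2 = d 0 * d (i - 1)) \<and>
      (\<forall>k<n. (cmod (W k))\<^sup>2 = d k * d (succ_idx n k))"
    using \<open>4 \<le> n\<close> chain
    by (intro conj_cong ball_cong all_cong refl)
      (auto simp: W_def u_def d_def cs_complex_def n_def[symmetric] cmod_power2 succ_idx_def)
  finally show ?thesis .
qed

lemma cycle_constr_imp_chain:
  fixes c s :: "'b \<Rightarrow> 'b \<Rightarrow> real" and W :: "nat \<Rightarrow> complex" and d :: "nat \<Rightarrow> real"
  assumes n_def: "n = length C"
    and W_def: "W = (\<lambda>k. cs_complex c s (C ! k) (C ! succ_idx n k))"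
    and d_def: "d = (\<lambda>k. c (C ! k) (C ! k))"
    and "3 \<le> n"
    and closing: "cs_complex c s (C ! 0) (C ! (n - 1)) = cnj (W (n - 1))"
    and "cycle_constr c s C ct st"
  obtains u :: "nat \<Rightarrow> complex" where "u 2 = W 0" and "u n = cnj (W (n - 1))"
    and "\<And>i. 2 \<le> i \<Longrightarrow> i < n \<Longrightarrow> d i * u i = cnj (W (i - 1)) * u (Suc i)"
proof (cases "n = 3")
  case True
  then have triangle: "d 2 * W 0 = cnj (W 1) * cnj (W 2)"
    using cycle_constr_triangle_iff[OF n_def W_def d_def] \<open>cycle_constr c s C ct st\<close> by blast
  define u where "u = (\<lambda>i::nat. if i = 2 then W 0 else cnj (W 2))"
  have "d i * u i = cnj (W (i - 1)) * u (Suc i)" if "2 \<le> i" "i < n" for i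
  proof -
    have "i = 2" using that True by simp
    then show ?thesis using triangle by (simp add: u_def)
  qed
  then show ?thesis
    using True by (intro that[of u]) (simp_all add: u_def)
next
  case False
  with \<open>3 \<le> n\<close> have "4 \<le> n" by simp
  define u where "u = (\<lambda>i. Complex (ct i) (st i))"
  have "u 2 = W 0" "u n = cs_complex c s (C ! 0) (C ! (n - 1))"
    and "\<forall>i\<in>{2..n-1}. d i * u i = cnj (W (i - 1)) * u (Suc i)"
    using cycle_constr_chain_iff[OF n_def W_def d_def u_def \<open>4 \<le> n\<close>] \<open>cycle_constr c s C ct st\<close>
    by blast+
  with closing show ?thesis
    by (intro that[of u]) auto
qed

lemma prod_cycle_eq_prod_diag:
  fixes W u :: "nat \<Rightarrow> complex" and d :: "nat \<Rightarrow> real"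
  assumes "2 \<le> n"
    and nonzero: "\<And>k. k < n \<Longrightarrow> d k \<noteq> 0"
    and norm_W: "\<And>k. k < n \<Longrightarrow> (cmod (W k))\<^sup>2 = d k * d (succ_idx n k)"
    and first: "u 2 = W 0" and last: "u n = cnj (W (n - 1))"
    and step: "\<And>i. 2 \<le> i \<Longrightarrow> i < n \<Longrightarrow> d i * u i = cnj (W (i - 1)) * u (Suc i)"
  shows "(\<Prod>k<n. W k) = (\<Prod>k<n. complex_of_real (d k))"
proof -
  have forward: "u i * W (i - 1) = d (i - 1) * u (Suc i)" if "2 \<le> i" "i < n" for i
  proof -
    have "d i * (u i * W (i - 1)) = cnj (W (i - 1)) * W (i - 1) * u (Suc i)"
      using step[OF that] by (metis mult.assoc mult.commute)
    also have "\<dots> = d i * (d (i - 1) * u (Suc i))"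
      using norm_W[of "i - 1"] that
      by (simp add: complex_norm_square[symmetric] mult.commute[of "cnj _"] succ_idx_def)
    finally show ?thesis using nonzero[of i] that by simp
  qed
  have partial: "d 0 * (\<Prod>k<Suc m. W k) = u (m + 2) * (\<Prod>k<Suc m. complex_of_real (d k))"
    if "m + 2 \<le> n" for m
    using that
  proof (induction m)
    case 0
    then show ?case using first by (simp add: numeral_2_eq_2)
  next
    case (Suc m)
    have "d 0 * (\<Prod>k<Suc (Suc m). W k) = u (m + 2) * W (m + 1) * (\<Prod>k<Suc m. complex_of_real (d k))"
      using Suc by (simp add: mult_ac)
    also have "u (m + 2) * W (m + 1) = d (m + 1) * u (Suc m + 2)"
      using forward[of "m + 2"] Suc.prems by (simp add: numeral_eq_Suc)
    finally show ?case by (simp add: mult_ac)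
  qed
  have "d 0 * (\<Prod>k<n. W k) = d 0 * (\<Prod>k<n - 1. W k) * W (n - 1)"
    using \<open>2 \<le> n\<close> by (metis Suc_diff_1 mult.assoc not_numeral_le_zero not_gr_zero prod.lessThan_Suc)
  also have "\<dots> = cnj (W (n - 1)) * W (n - 1) * (\<Prod>k<n - 1. complex_of_real (d k))"
    using partial[of "n - 2"] last \<open>2 \<le> n\<close> by (simp add: Suc_diff_Suc numeral_eq_Suc mult_ac)
  also have "cnj (W (n - 1)) * W (n - 1) = d (n - 1) * d 0"
    using norm_W[of "n - 1"] \<open>2 \<le> n\<close> complex_norm_square[of "W (n - 1)"]
    by (simp add: mult.commute succ_idx_def)
  also have "d (n - 1) * d 0 * (\<Prod>k<n - 1. complex_of_real (d k)) = d 0 * (\<Prod>k<n. complex_of_real (d k))"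
    using \<open>2 \<le> n\<close> prod.lessThan_Suc[of "\<lambda>k. complex_of_real (d k)" "n - 1"] by (simp add: mult_ac)
  finally show ?thesis using nonzero[of 0] \<open>2 \<le> n\<close> by simp
qed

lemma prod_cycle_edges_eq_prod_diag:
  assumes cycle: "is_cycle N C"
    and pos: "\<And>i. i \<in> buses N \<Longrightarrow> 0 < c i i"
    and sym: "\<And>i j. {i, j} \<in> lines N \<Longrightarrow> c i j = c j i \<and> s i j = - s j i"
    and "coupling N c s"
    and "cycle_constr c s C ct st"
  shows "(\<Prod>k<length C. cs_complex c s (C ! k) (C ! succ_idx (length C) k))
           = complex_of_real (\<Prod>k<length C. c (C ! k) (C ! k))"
proof -
  define n where "n = length C"
  define W where "W = (\<lambda>k. cs_complex c s (C ! k) (C ! succ_idx n k))"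
  define d where "d = (\<lambda>k. c (C ! k) (C ! k))"
  have "3 \<le> n" using cycle by (simp add: is_cycle_def n_def)
  have d_pos: "0 < d k" if "k < n" for k
    using pos is_cycleD(1)[OF cycle] that by (simp add: d_def n_def)
  have norm_W: "(cmod (W k))\<^sup>2 = d k * d (succ_idx n k)" if "k < n" for k
    using \<open>coupling N c s\<close> is_cycleD(2)[OF cycle] that
    by (simp add: coupling_def W_def d_def n_def cs_complex_def cmod_power2)
  have closing: "cs_complex c s (C ! 0) (C ! (n - 1)) = cnj (W (n - 1))"
  proof -
    have "succ_idx n (n - 1) = 0"
      using \<open>3 \<le> n\<close> by (intro succ_idx_last) linarith
    moreover have "c (C ! 0) (C ! (n - 1)) = c (C ! (n - 1)) (C ! 0)"
      and "s (C ! 0) (C ! (n - 1)) = - s (C ! (n - 1)) (C ! 0)"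
      using sym[OF is_cycle_closing_line[OF cycle]] by (simp_all add: n_def)
    ultimately show ?thesis
      by (simp add: W_def cs_complex_def complex_eq_iff)
  qed
  obtain u :: "nat \<Rightarrow> complex" where first: "u 2 = W 0" and last: "u n = cnj (W (n - 1))"
    and step: "\<And>i. 2 \<le> i \<Longrightarrow> i < n \<Longrightarrow> d i * u i = cnj (W (i - 1)) * u (Suc i)"
    using cycle_constr_imp_chain[OF n_def W_def d_def \<open>3 \<le> n\<close> closing \<open>cycle_constr c s C ct st\<close>] by blast
  have "(\<Prod>k<n. W k) = (\<Prod>k<n. complex_of_real (d k))"
    by (rule prod_cycle_eq_prod_diag[OF _ _ norm_W first last step])
      (use \<open>3 \<le> n\<close> d_pos in \<open>force+\<close>)
  then show ?thesis
    by (simp add: W_def d_def n_def)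
qed

lemma cycle_angle_sum_eq_2pi_int:
  assumes cycle: "is_cycle N C"
    and pos: "\<And>i. i \<in> buses N \<Longrightarrow> 0 < c i i"
    and sym: "\<And>i j. {i, j} \<in> lines N \<Longrightarrow> c i j = c j i \<and> s i j = - s j i"
    and "coupling N c s"
    and "cycle_constr c s C ct st"
  shows "\<exists>m::int. cycle_angle_sum c s C = 2 * pi * of_int m"
proof -
  define n where "n = length C"
  define W where "W = (\<lambda>k. cs_complex c s (C ! k) (C ! succ_idx n k))"
  have bus_pos: "0 < c (C ! k) (C ! k)" if "k < n" for k
    using pos is_cycleD(1)[OF cycle] that by (simp add: n_def)
  have W_nonzero: "W k \<noteq> 0" if "k < n" for k
  proof -
    have "(cmod (W k))\<^sup>2 = c (C ! k) (C ! k) * c (C ! succ_idx n k) (C ! succ_idx n k)"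
      using \<open>coupling N c s\<close> is_cycleD(2)[OF cycle] that
      by (simp add: coupling_def W_def n_def cs_complex_def cmod_power2)
    also have "\<dots> > 0"
      using bus_pos that succ_idx_less[of n k] by simp
    finally show ?thesis by auto
  qed
  have "0 < (\<Prod>k<n. c (C ! k) (C ! k))"
    using bus_pos by (intro prod_pos) simp
  then have "\<exists>m::int. (\<Sum>k<n. Arg (W k)) = 2 * pi * of_int m"
    using W_nonzero prod_cycle_edges_eq_prod_diag[OF assms]
    by (intro sum_Arg_eq_2pi_int[of "{..<n}" W]) (simp_all add: W_def n_def)
  then show ?thesis
    by (simp add: cycle_angle_sum_def atan2_def W_def cs_complex_def n_def)
qed

lemma ALT_diag_pos:
  assumes "wf_network N" and "ALT N pg qg c s" and "i \<in> buses N"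
  shows "0 < c i i"
proof -
  have "0 < Vmin N i" using assms(1,3) unfolding wf_network_def by blast
  moreover have "(Vmin N i)\<^sup>2 \<le> c i i" using assms(2,3) unfolding ALT_def by blast
  ultimately show ?thesis by (meson less_le_trans zero_less_power)
qed

lemma OPF_feasible_voltages:
  assumes "wf_network N" and "orientation N Or" and "OPF_feasible N Or pg qg c s \<theta>"
  shows "\<exists>v. (\<forall>i j. {i, j} \<in> lines N \<longrightarrow> cs_complex c s i j = cnj (v i) * v j) \<and>
             (\<forall>i\<in>buses N. c i i = (cmod (v i))\<^sup>2)"
proof -
  have alt: "ALT N pg qg c s" and "coupling N c s"
    and angle: "\<And>i j. (i, j) \<in> Or \<Longrightarrow> \<theta> j - \<theta> i = atan2 (s i j) (c i j)"
    using assms(3) unfolding OPF_feasible_def by auto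
  have c_nonneg: "0 \<le> c i i" if "i \<in> buses N" for i
    using ALT_diag_pos[OF assms(1) alt that] by simp
  define v where "v i = rcis (sqrt (c i i)) (\<theta> i)" for i
  have oriented: "cs_complex c s i j = cnj (v i) * v j" if "(i, j) \<in> Or" for i j
  proof -
    define z where "z = cs_complex c s i j"
    have line: "{i, j} \<in> lines N"
      using assms(2) that unfolding orientation_def by auto
    have "cmod z = sqrt (c i i) * sqrt (c j j)"
      using \<open>coupling N c s\<close> line
      by (simp add: z_def cs_complex_def cmod_def coupling_def real_sqrt_mult)
    moreover have "Arg z = \<theta> j - \<theta> i"
      using angle[OF that] by (simp add: z_def cs_complex_def atan2_def)
    ultimately have "z = rcis (sqrt (c i i) * sqrt (c j j)) (\<theta> j - \<theta> i)"
      by (metis rcis_cmod_Arg)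
    then show ?thesis
      by (simp add: z_def v_def cnj_rcis rcis_mult)
  qed
  have "cs_complex c s i j = cnj (v i) * v j" if "{i, j} \<in> lines N" for i j
  proof (cases "(i, j) \<in> Or")
    case True
    then show ?thesis by (rule oriented)
  next
    case False
    then have "(j, i) \<in> Or"
      using assms(2) that unfolding orientation_def by blast
    moreover have "c i j = c j i" "s i j = - s j i"
      using alt that unfolding ALT_def by blast+
    ultimately show ?thesis
      using oriented[of j i] by (simp add: cs_complex_def complex_eq_iff mult.commute)
  qed
  moreover have "c i i = (cmod (v i))\<^sup>2" if "i \<in> buses N" for i
    using c_nonneg[OF that] by (simp add: v_def)
  ultimately show ?thesis by blast
qed

lemma chain_of_voltages:
  fixes x W u :: "nat \<Rightarrow> complex" and d :: "nat \<Rightarrow> real"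
  assumes "3 \<le> n"
    and W_eq: "\<And>k. k < n \<Longrightarrow> W k = cnj (x k) * x (succ_idx n k)"
    and d_eq: "\<And>k. k < n \<Longrightarrow> d k = (cmod (x k))\<^sup>2"
    and u_def: "u = (\<lambda>i. cnj (x 0) * x (i - 1))"
  shows "n = 3 \<Longrightarrow> d 2 * W 0 = cnj (W 1) * cnj (W 2)"
    and "u 2 = W 0"
    and "i \<in> {2..n-1} \<Longrightarrow> d i * u i = cnj (W (i - 1)) * u (Suc i)"
    and "i \<in> {2..n-1} \<Longrightarrow> (cmod (u i))\<^sup>2 = d 0 * d (i - 1)"
    and "k < n \<Longrightarrow> (cmod (W k))\<^sup>2 = d k * d (succ_idx n k)"
proof -
  have d_eq_complex: "complex_of_real (d k) = cnj (x k) * x k" if "k < n" for k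
    using d_eq[OF that] complex_norm_square[of "x k"] by (simp add: mult.commute)
  show "d 2 * W 0 = cnj (W 1) * cnj (W 2)" if "n = 3"
  proof -
    have "succ_idx n 0 = 1" "succ_idx n 1 = 2" "succ_idx n 2 = 0"
      using that by (simp_all add: succ_idx_def)
    then show ?thesis
      using that by (simp add: W_eq d_eq_complex mult_ac)
  qed
  show "u 2 = W 0"
    using W_eq[of 0] succ_idx_eq_Suc[of 0 n] \<open>3 \<le> n\<close> by (simp add: u_def numeral_2_eq_2)
  show "d i * u i = cnj (W (i - 1)) * u (Suc i)" if "i \<in> {2..n-1}"
  proof -
    have "i < n" "succ_idx n (i - 1) = i"
      using that \<open>3 \<le> n\<close> by (auto simp: succ_idx_eq_Suc)
    then show ?thesis
      using d_eq_complex[of i] W_eq[of "i - 1"] by (simp add: u_def mult_ac)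
  qed
  show "(cmod (u i))\<^sup>2 = d 0 * d (i - 1)" if "i \<in> {2..n-1}"
  proof -
    have "i - 1 < n" using that by auto
    then show ?thesis
      using \<open>3 \<le> n\<close> d_eq[of 0] d_eq[of "i - 1"] by (simp add: u_def norm_mult power_mult_distrib)
  qed
  show "(cmod (W k))\<^sup>2 = d k * d (succ_idx n k)" if "k < n"
    using that d_eq[of k] d_eq[of "succ_idx n k"] W_eq[of k] succ_idx_less[of n k] \<open>3 \<le> n\<close>
    by (simp add: norm_mult power_mult_distrib)
qed

lemma cycle_constr_of_voltages:
  fixes v :: "'b \<Rightarrow> complex"
  assumes cycle: "is_cycle N C"
    and line_eq: "\<And>i j. {i, j} \<in> lines N \<Longrightarrow> cs_complex c s i j = cnj (v i) * v j"
    and bus_eq: "\<And>i. i \<in> buses N \<Longrightarrow> c i i = (cmod (v i))\<^sup>2"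
  shows "\<exists>ct st. cycle_constr c s C ct st"
proof -
  define n where "n = length C"
  define W where "W = (\<lambda>k. cs_complex c s (C ! k) (C ! succ_idx n k))"
  define d where "d = (\<lambda>k. c (C ! k) (C ! k))"
  define u where "u = (\<lambda>i. cnj (v (C ! 0)) * v (C ! (i - 1)))"
  have "3 \<le> n" using cycle by (simp add: is_cycle_def n_def)
  have W_eq: "W k = cnj (v (C ! k)) * v (C ! succ_idx n k)" if "k < n" for k
    using line_eq is_cycleD(2)[OF cycle] that by (simp add: W_def n_def)
  have d_eq: "d k = (cmod (v (C ! k)))\<^sup>2" if "k < n" for k
    using bus_eq is_cycleD(1)[OF cycle] that by (simp add: d_def n_def)
  note chain = chain_of_voltages[of n W "\<lambda>k. v (C ! k)" d u, OF \<open>3 \<le> n\<close> W_eq d_eq u_def]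
  show ?thesis
  proof (cases "n = 3")
    case True
    then have "cycle_constr c s C ct st" for ct st
      using cycle_constr_triangle_iff[OF n_def W_def d_def True] chain(1) by blast
    then show ?thesis by blast
  next
    case False
    with \<open>3 \<le> n\<close> have "4 \<le> n" by simp
    have "u n = cs_complex c s (C ! 0) (C ! (n - 1))"
      using line_eq[OF is_cycle_closing_line[OF cycle]] by (simp add: u_def n_def)
    then have "cycle_constr c s C (\<lambda>i. Re (u i)) (\<lambda>i. Im (u i))"
      using chain(2-5)
      by (intro cycle_constr_chain_iff[OF n_def W_def d_def _ \<open>4 \<le> n\<close>, THEN iffD2]) auto
    then show ?thesis by blast
  qed
qed

theorem proposition7:
  fixes N :: "'b network" and \<C> :: "'b list set"
  assumes "wf_network N" and "cycle_basis N \<C>"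
  shows "(\<forall>Or pg qg c s \<theta>. orientation N Or \<and> OPF_feasible N Or pg qg c s \<theta> \<longrightarrow>
            (\<forall>C\<in>\<C>. \<exists>ct st. cycle_constr c s C ct st))
       \<and> (\<forall>pg qg c s. ALT N pg qg c s \<and> coupling N c s \<and>
            (\<forall>C\<in>\<C>. \<exists>ct st. cycle_constr c s C ct st) \<longrightarrow>
            (\<forall>C\<in>\<C>. \<exists>k::int. cycle_angle_sum c s C = 2 * pi * of_int k))"
proof (intro conjI allI impI ballI)
  fix Or pg qg c s \<theta> and C :: "'b list"
  assume "orientation N Or \<and> OPF_feasible N Or pg qg c s \<theta>" and "C \<in> \<C>"
  then obtain v where "\<forall>i j. {i, j} \<in> lines N \<longrightarrow> cs_complex c s i j = cnj (v i) * v j"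
    and "\<forall>i\<in>buses N. c i i = (cmod (v i))\<^sup>2"
    using OPF_feasible_voltages[OF assms(1)] by blast
  moreover have "is_cycle N C"
    using assms(2) \<open>C \<in> \<C>\<close> unfolding cycle_basis_def by blast
  ultimately show "\<exists>ct st. cycle_constr c s C ct st"
    using cycle_constr_of_voltages by blast
next
  fix pg qg c s and C :: "'b list"
  assume "ALT N pg qg c s \<and> coupling N c s \<and> (\<forall>C\<in>\<C>. \<exists>ct st. cycle_constr c s C ct st)"
    and "C \<in> \<C>"
  then have alt: "ALT N pg qg c s" and "coupling N c s"
    and "\<exists>ct st. cycle_constr c s C ct st" by blast+
  moreover have "is_cycle N C"
    using assms(2) \<open>C \<in> \<C>\<close> unfolding cycle_basis_def by blast
  moreover have "\<And>i j. {i, j} \<in> lines N \<Longrightarrow> c i j = c j i \<and> s i j = - s j i"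
    using alt unfolding ALT_def by blast
  ultimately show "\<exists>k::int. cycle_angle_sum c s C = 2 * pi * of_int k"
    using cycle_angle_sum_eq_2pi_int ALT_diag_pos[OF assms(1) alt] by blast
qed

end
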